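(* Let $F$, $R$, $e$, $f$, $\mathcal{D}^R$, $\Pi_R$ be as in the context. For every Lipschitz function $a$ on $R$, $$\frac{p^{1/e}-1}{2p^{1/e}\sqrt{p^f}}\,L_1(a)\ \le\ L_{\mathcal{D}^R}(a)\ \le\ \sqrt{\frac{p^f-1}{p^f}}\,L_1(a),$$ where $L_1(a)=\sup_{x\ne y\in R}\frac{|a(x)-a(y)|}{|x-y|}$ and $L_{\mathcal{D}^R}(a)=\|[\mathcal{D}^R,\Pi_R(a)]\|$.
   Context: Let $p$ be a prime, $F$ a finite extension of $\mathbb{Q}_p$ with absolute value $|\cdot|$ extending the $p$-adic one, $R=\{|x|\le1\}$, $\pi$ a uniformizer with $|\pi|=p^{-1/e}$, residue field of size $p^f$, $S=\{s_0=0,\dots,s_{p^f-1}\}\subset R$ representatives of $R/(\pi)$ containing $0$. For $n\ge0$, $X_n^R=\{\sum_{k=0}^{n-1}x_k\pi^k: x_k\in S\}$. $H^R$ is the Hilbert space of $\phi=(\phi_n)_{n\ge0}$, $\phi_n:X_n^R\to\mathbb{C}$, with $\|\phi\|^2=\sum_n\sum_{x\in X_n^R}|\phi_n(x)|^2p^{-nf}<\infty$. $(D\phi)_n(x)=p^{n/e}\big(\phi_n(x)-p^{-f}\sum_{s\in S}\phi_{n+1}(x+s\pi^n)\big)$, and $D^R$ is $D$ on its maximal domain in $H^R$. For $a\in C(R)$, $(\rho_R(a)\phi)_n(x)=a(x)\phi_n(x)$. Set $\mathcal{H}^R=H^R\oplus H^R$, $\Pi_R=\rho_R\oplus\rho_R$,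 $\mathcal{D}^R=\begin{pmatrix}0&D^R\\(D^R)^*&0\end{pmatrix}$. The norm of an unbounded commutator is taken to be $+\infty$. *)

theory Defs
  imports "HOL-Analysis.Analysis" "HOL-Computational_Algebra.Primes"
begin

definition padic_abs_rat :: "nat \<Rightarrow> rat \<Rightarrow> real" where
  "padic_abs_rat p q =
     (let (a, b) = quotient_of q in
      if a = 0 then 0
      else real p powr (- (real (multiplicity (int p) a) - real (multiplicity (int p) b))))"

definition Qp_in :: "('a::field_char_0 \<Rightarrow> real) \<Rightarrow> 'a set" where
  "Qp_in av = {x. \<exists>r :: nat \<Rightarrow> rat. (\<lambda>n. av (of_rat (r n) - x)) \<longlonglongrightarrow> 0}"

definition padic_extension :: "nat \<Rightarrow> ('a::field_char_0 \<Rightarrow> real) \<Rightarrow> bool" where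
  "padic_extension p av \<longleftrightarrow>
     (\<forall>x. av x \<ge> 0) \<and> (\<forall>x. av x = 0 \<longleftrightarrow> x = 0) \<and>
     (\<forall>x y. av (x * y) = av x * av y) \<and>
     (\<forall>x y. av (x + y) \<le> max (av x) (av y)) \<and>
     (\<forall>q. av (of_rat q) = padic_abs_rat p q) \<and>
     \<comment> \<open>completeness\<close>
     (\<forall>u :: nat \<Rightarrow> 'a. (\<forall>\<epsilon>>0. \<exists>N. \<forall>m\<ge>N. \<forall>n\<ge>N. av (u m - u n) < \<epsilon>)
         \<longrightarrow> (\<exists>l. (\<lambda>n. av (u n - l)) \<longlonglongrightarrow> 0)) \<and>
     \<comment> \<open>finite-dimensional over Q_p\<close>
     (\<exists>B. finite B \<and> (\<forall>x. \<exists>c. (\<forall>b\<in>B. c b \<in> Qp_in av) \<and> x = (\<Sum>b\<in>B. c b * b)))"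

definition int_ring :: "('a \<Rightarrow> real) \<Rightarrow> 'a set" where
  "int_ring av = {x. av x \<le> 1}"

text \<open>pi is a uniformizer with |pi| = p^(-1/e); S is a set of representatives of R/(pi)
  containing 0, of cardinality p^f (the size of the residue field).\<close>
definition local_data ::
  "nat \<Rightarrow> ('a::field_char_0 \<Rightarrow> real) \<Rightarrow> nat \<Rightarrow> nat \<Rightarrow> 'a \<Rightarrow> 'a set \<Rightarrow> bool" where
  "local_data p av e f \<pi> S \<longleftrightarrow>
     e > 0 \<and> f > 0 \<and>
     \<pi> \<noteq> 0 \<and> av \<pi> < 1 \<and> (\<forall>x. av x < 1 \<longrightarrow> av x \<le> av \<pi>) \<and>
     av \<pi> = real p powr (- 1 / real e) \<and>
     finite S \<and> card S = p ^ f \<and> 0 \<in> S \<and> S \<subseteq> int_ring av \<and>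
     (\<forall>x\<in>int_ring av. \<exists>!s\<in>S. av (x - s) < 1)"

definition Xn :: "'a::field \<Rightarrow> 'a set \<Rightarrow> nat \<Rightarrow> 'a set" where
  "Xn \<pi> S n = {y. \<exists>x::nat \<Rightarrow> 'a. (\<forall>k<n. x k \<in> S) \<and> y = (\<Sum>k<n. x k * \<pi> ^ k)}"

type_synonym 'a vec = "nat \<Rightarrow> 'a \<Rightarrow> complex"

definition inH :: "nat \<Rightarrow> nat \<Rightarrow> 'a::field \<Rightarrow> 'a set \<Rightarrow> 'a vec \<Rightarrow> bool" where
  "inH p f \<pi> S \<phi> \<longleftrightarrow>
     (\<forall>n x. x \<notin> Xn \<pi> S n \<longrightarrow> \<phi> n x = 0) \<and>
     summable (\<lambda>n. (\<Sum>x\<in>Xn \<pi> S n. (cmod (\<phi> n x))\<^sup>2) * real p powr (- real (n * f)))"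

definition hnorm :: "nat \<Rightarrow> nat \<Rightarrow> 'a::field \<Rightarrow> 'a set \<Rightarrow> 'a vec \<Rightarrow> real" where
  "hnorm p f \<pi> S \<phi> =
     sqrt (\<Sum>n. (\<Sum>x\<in>Xn \<pi> S n. (cmod (\<phi> n x))\<^sup>2) * real p powr (- real (n * f)))"

definition hinner :: "nat \<Rightarrow> nat \<Rightarrow> 'a::field \<Rightarrow> 'a set \<Rightarrow> 'a vec \<Rightarrow> 'a vec \<Rightarrow> complex" where
  "hinner p f \<pi> S \<phi> \<psi> =
     (\<Sum>n. (\<Sum>x\<in>Xn \<pi> S n. \<phi> n x * cnj (\<psi> n x)) * complex_of_real (real p powr (- real (n * f))))"

definition Dop :: "nat \<Rightarrow> nat \<Rightarrow> nat \<Rightarrow> 'a::field \<Rightarrow> 'a set \<Rightarrow> 'a vec \<Rightarrow> 'a vec" where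
  "Dop p e f \<pi> S \<phi> = (\<lambda>n x. if x \<in> Xn \<pi> S n then
      complex_of_real (real p powr (real n / real e)) *
        (\<phi> n x - complex_of_real (real p powr (- real f)) * (\<Sum>s\<in>S. \<phi> (Suc n) (x + s * \<pi> ^ n)))
      else 0)"

definition domD :: "nat \<Rightarrow> nat \<Rightarrow> nat \<Rightarrow> 'a::field \<Rightarrow> 'a set \<Rightarrow> 'a vec set" where
  "domD p e f \<pi> S = {\<phi>. inH p f \<pi> S \<phi> \<and> inH p f \<pi> S (Dop p e f \<pi> S \<phi>)}"

definition is_adj_val :: "nat \<Rightarrow> nat \<Rightarrow> nat \<Rightarrow> 'a::field \<Rightarrow> 'a set \<Rightarrow> 'a vec \<Rightarrow> 'a vec \<Rightarrow> bool" where
  "is_adj_val p e f \<pi> S \<psi> \<eta> \<longleftrightarrow> inH p f \<pi> S \<eta> \<and>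
     (\<forall>\<phi>\<in>domD p e f \<pi> S. hinner p f \<pi> S (Dop p e f \<pi> S \<phi>) \<psi> = hinner p f \<pi> S \<phi> \<eta>)"

definition domDstar :: "nat \<Rightarrow> nat \<Rightarrow> nat \<Rightarrow> 'a::field \<Rightarrow> 'a set \<Rightarrow> 'a vec set" where
  "domDstar p e f \<pi> S = {\<psi>. inH p f \<pi> S \<psi> \<and> (\<exists>\<eta>. is_adj_val p e f \<pi> S \<psi> \<eta>)}"

definition Dstar :: "nat \<Rightarrow> nat \<Rightarrow> nat \<Rightarrow> 'a::field \<Rightarrow> 'a set \<Rightarrow> 'a vec \<Rightarrow> 'a vec" where
  "Dstar p e f \<pi> S \<psi> = (THE \<eta>. is_adj_val p e f \<pi> S \<psi> \<eta>)"

definition rho :: "('a \<Rightarrow> complex) \<Rightarrow> 'a vec \<Rightarrow> 'a vec" where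
  "rho a \<phi> = (\<lambda>n x. a x * \<phi> n x)"

definition vdiff :: "'a vec \<Rightarrow> 'a vec \<Rightarrow> 'a vec" where
  "vdiff \<phi> \<psi> = (\<lambda>n x. \<phi> n x - \<psi> n x)"

text \<open>L_{D^R}(a) = norm of the commutator [calD, Pi_R(a)] on H \<oplus> H, as an extended real
  (+infinity if unbounded). Here calD(phi1,phi2) = (D phi2, D^* phi1), so the commutator
  applied to (phi1,phi2) is (D(a phi2) - a D phi2, D^*(a phi1) - a D^* phi1); its natural
  domain is {xi in dom calD. Pi(a) xi in dom calD}.\<close>
definition L_D :: "nat \<Rightarrow> nat \<Rightarrow> nat \<Rightarrow> 'a::field \<Rightarrow> 'a set \<Rightarrow> ('a \<Rightarrow> complex) \<Rightarrow> ereal" where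
  "L_D p e f \<pi> S a = Sup {ereal (
        sqrt ((hnorm p f \<pi> S (vdiff (Dop p e f \<pi> S (rho a \<phi>2)) (rho a (Dop p e f \<pi> S \<phi>2))))\<^sup>2
            + (hnorm p f \<pi> S (vdiff (Dstar p e f \<pi> S (rho a \<phi>1)) (rho a (Dstar p e f \<pi> S \<phi>1))))\<^sup>2)
        / sqrt ((hnorm p f \<pi> S \<phi>1)\<^sup>2 + (hnorm p f \<pi> S \<phi>2)\<^sup>2)) | \<phi>1 \<phi>2.
      \<phi>1 \<in> domDstar p e f \<pi> S \<and> \<phi>2 \<in> domD p e f \<pi> S \<and>
      rho a \<phi>1 \<in> domDstar p e f \<pi> S \<and> rho a \<phi>2 \<in> domD p e f \<pi> S \<and>
      (hnorm p f \<pi> S \<phi>1)\<^sup>2 + (hnorm p f \<pi> S \<phi>2)\<^sup>2 > 0}"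

definition lipschitz_on_R :: "('a::ab_group_add \<Rightarrow> real) \<Rightarrow> ('a \<Rightarrow> complex) \<Rightarrow> bool" where
  "lipschitz_on_R av a \<longleftrightarrow>
     (\<exists>K. \<forall>x\<in>int_ring av. \<forall>y\<in>int_ring av. cmod (a x - a y) \<le> K * av (x - y))"

definition L1 :: "('a::ab_group_add \<Rightarrow> real) \<Rightarrow> ('a \<Rightarrow> complex) \<Rightarrow> real" where
  "L1 av a = Sup {cmod (a x - a y) / av (x - y) | x y. x \<in> int_ring av \<and> y \<in> int_ring av \<and> x \<noteq> y}"

end

theory Submission
  imports Defs
begin

text \<open>The commutator of \<open>D\<close> with multiplication by \<open>a\<close> acts level by level: at \<open>x \<in> X\<^sub>n\<close> it
  is \<open>p\<^bsup>n/e - f\<^esup>\<close> times the sum, over the \<open>p\<^sup>f\<close> children \<open>x + s \<pi>\<^sup>n\<close> of \<open>x\<close>, of the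
  increments \<open>a x - a (x + s \<pi>\<^sup>n)\<close> weighted by the next level. As \<open>|s \<pi>\<^sup>n| = p\<^bsup>-n/e\<^esup> |s|\<close>
  with \<open>|s| = 1\<close> except for \<open>s = 0\<close>, Cauchy-Schwarz bounds the \<open>D\<close>-component by
  \<open>sqrt ((p\<^sup>f - 1) / p\<^sup>f) L\<^sub>1(a)\<close>; the \<open>D\<^sup>*\<close>-component obeys the same bound by duality, pairing
  it with its own truncations. Conversely, a delta vector at level \<open>n + 1\<close> isolates a single
  increment, so \<open>|a x - a (x + s \<pi>\<^sup>n)| \<le> p\<^bsup>-n/e\<^esup> sqrt (p\<^sup>f) L\<^sub>D(a)\<close>. Since the nonzero values of
  \<open>|\<cdot>|\<close> on \<open>R\<close> are powers of \<open>p\<^bsup>-1/e\<^esup>\<close>, telescoping these increments along digit expansions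
  gives the Lipschitz constant \<open>2 p\<^bsup>1/e\<^esup> / (p\<^bsup>1/e\<^esup> - 1) sqrt (p\<^sup>f) L\<^sub>D(a)\<close>.\<close>

lemma le_square_if_le_mult_sqrt:
  fixes s K :: real
  assumes "0 \<le> s" "0 \<le> K" "s \<le> K * sqrt s"
  shows "s \<le> K\<^sup>2"
proof (cases "s = 0")
  case False
  then have "sqrt s * sqrt s \<le> K * sqrt s"
    using assms by simp
  then have "sqrt s \<le> K"
    by (rule mult_right_le_imp_le) (use False assms(1) in simp)
  then show ?thesis
    using assms(1) real_sqrt_le_iff by fastforce
qed (use assms in simp)

section \<open>Non-archimedean absolute values and Lipschitz constants\<close>

definition lipschitz_bound :: "('a::ab_group_add \<Rightarrow> real) \<Rightarrow> real \<Rightarrow> ('a \<Rightarrow> complex) \<Rightarrow> bool" where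
  "lipschitz_bound av L b \<longleftrightarrow>
     (\<forall>x\<in>int_ring av. \<forall>y\<in>int_ring av. cmod (b x - b y) \<le> L * av (x - y))"

lemma lipschitz_on_R_iff: "lipschitz_on_R av a \<longleftrightarrow> (\<exists>K. lipschitz_bound av K a)"
  by (simp add: lipschitz_on_R_def lipschitz_bound_def)

lemma lipschitz_boundD:
  "lipschitz_bound av L b \<Longrightarrow> x \<in> int_ring av \<Longrightarrow> y \<in> int_ring av \<Longrightarrow> cmod (b x - b y) \<le> L * av (x - y)"
  by (simp add: lipschitz_bound_def)

lemma lipschitz_bound_cnj: "lipschitz_bound av L b \<Longrightarrow> lipschitz_bound av L (\<lambda>x. cnj (b x))"
  unfolding lipschitz_bound_def by (metis complex_cnj_diff complex_mod_cnj)

locale nonarch_abs =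
  fixes av :: "'a::field \<Rightarrow> real"
  assumes av_nonneg: "av x \<ge> 0"
    and av_eq_0_iff: "av x = 0 \<longleftrightarrow> x = 0"
    and av_mult: "av (x * y) = av x * av y"
    and av_add_le_max: "av (x + y) \<le> max (av x) (av y)"
begin

lemma av_0 [simp]: "av 0 = 0"
  by (simp add: av_eq_0_iff)

lemma av_pos: "x \<noteq> 0 \<Longrightarrow> av x > 0"
  using av_eq_0_iff av_nonneg by (metis less_eq_real_def)

lemma av_1 [simp]: "av 1 = 1"
  using av_mult[of 1 1] av_pos[of 1] by simp

lemma av_minus [simp]: "av (- x) = av x"
proof -
  have "av (-1) * av (-1) = 1"
    using av_mult[of "-1" "-1"] by simp
  then have "av (-1) = 1"
    using av_nonneg[of "-1"] square_eq_1_iff[of "av (-1)"] by auto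
  then show ?thesis
    using av_mult[of "-1" x] by simp
qed

lemma av_diff_commute: "av (x - y) = av (y - x)"
  by (metis av_minus minus_diff_eq)

lemma av_diff_le_max: "av (x - y) \<le> max (av x) (av y)"
  using av_add_le_max[of x "- y"] by simp

lemma av_power: "av (x ^ n) = av x ^ n"
  by (induction n) (simp_all add: av_mult)

lemma av_divide: "av (x / y) = av x / av y"
proof (cases "y = 0")
  case False
  then have "av x = av y * av (x / y)"
    using av_mult[of y "x / y"] by simp
  then show ?thesis
    using av_pos[OF False] by (simp add: field_simps)
qed simp

lemma av_diff_ultrametric: "av (x - z) \<le> max (av (x - y)) (av (y - z))"
  using av_add_le_max[of "x - y" "y - z"] by simp

lemma lipschitz_bound_nonneg: "lipschitz_bound av L b \<Longrightarrow> L \<ge> 0"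
  using lipschitz_boundD[of av L b 1 0] by (simp add: int_ring_def) (meson norm_ge_zero order_trans)

lemma lipschitz_bound_L1:
  assumes "lipschitz_on_R av a"
  shows "lipschitz_bound av (L1 av a) a"
  unfolding lipschitz_bound_def
proof (intro ballI)
  fix x y assume xy: "x \<in> int_ring av" "y \<in> int_ring av"
  obtain K where K: "lipschitz_bound av K a"
    using assms unfolding lipschitz_on_R_iff ..
  let ?Q = "{cmod (a x - a y) / av (x - y) | x y. x \<in> int_ring av \<and> y \<in> int_ring av \<and> x \<noteq> y}"
  have "bdd_above ?Q"
  proof (rule bdd_aboveI, clarify)
    fix u v assume "u \<in> int_ring av" "v \<in> int_ring av" "u \<noteq> v"
    then show "cmod (a u - a v) / av (u - v) \<le> K"
      using K av_pos[of "u - v"] by (simp add: lipschitz_bound_def divide_le_eq)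
  qed
  show "cmod (a x - a y) \<le> L1 av a * av (x - y)"
  proof (cases "x = y")
    case False
    then have "cmod (a x - a y) / av (x - y) \<le> L1 av a"
      unfolding L1_def using xy \<open>bdd_above ?Q\<close> by (intro cSup_upper) auto
    then show ?thesis
      using av_pos[of "x - y"] False by (simp add: divide_le_eq)
  qed simp
qed

lemma L1_le_lipschitz_bound: "lipschitz_bound av K a \<Longrightarrow> L1 av a \<le> K"
  unfolding L1_def
proof (rule cSup_least)
  show "{cmod (a x - a y) / av (x - y) | x y. x \<in> int_ring av \<and> y \<in> int_ring av \<and> x \<noteq> y} \<noteq> {}"
  proof -
    have "(1::'a) \<in> int_ring av" "(0::'a) \<in> int_ring av"
      by (simp_all add: int_ring_def)
    then show ?thesis
      by (metis (mono_tags, lifting) empty_iff mem_Collect_eq zero_neq_one)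
  qed
qed (auto simp: lipschitz_bound_def divide_le_eq av_pos)

end

lemma nonarch_abs_if_padic_extension: "padic_extension p av \<Longrightarrow> nonarch_abs av"
  unfolding padic_extension_def nonarch_abs_def by (elim conjE) simp

section \<open>Digit expansions\<close>

locale padic_local_field = nonarch_abs av for av :: "'a::field_char_0 \<Rightarrow> real" +
  fixes p e f :: nat and \<pi> :: 'a and S :: "'a set"
  assumes p_gt_1: "1 < p"
    and local_data: "local_data p av e f \<pi> S"
begin

abbreviation "R \<equiv> int_ring av"
abbreviation "q \<equiv> av \<pi>"
abbreviation "X n \<equiv> Xn \<pi> S n"

lemma f_pos: "f > 0" and pi_nonzero: "\<pi> \<noteq> 0" and q_lt_1: "q < 1"
  and av_le_q_if_lt_1: "av x < 1 \<Longrightarrow> av x \<le> q"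
  and q_eq: "q = real p powr (- 1 / real e)"
  and finite_S: "finite S" and card_S: "card S = p ^ f" and zero_in_S: "0 \<in> S"
  and S_subset_R: "S \<subseteq> R"
  and residue_representative: "x \<in> R \<Longrightarrow> \<exists>!s\<in>S. av (x - s) < 1"
  using local_data unfolding local_data_def by blast+

lemma q_pos: "q > 0"
  using av_pos[OF pi_nonzero] .

lemma mem_R_iff: "x \<in> R \<longleftrightarrow> av x \<le> 1"
  by (simp add: int_ring_def)

lemma q_power_le: "m \<le> n \<Longrightarrow> q ^ n \<le> q ^ m"
  using q_pos q_lt_1 by (simp add: power_decreasing)

lemma av_digit_le_1: "s \<in> S \<Longrightarrow> av s \<le> 1"
  using S_subset_R by (auto simp: mem_R_iff)

lemma av_digit_diff_le_1:
  assumes "s \<in> S" "t \<in> S"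
  shows "av (s - t) \<le> 1"
  using assms av_digit_le_1 by (meson av_diff_le_max max.boundedI order_trans)

lemma digit_eq_if_close: "s \<in> S \<Longrightarrow> t \<in> S \<Longrightarrow> av (s - t) < 1 \<Longrightarrow> s = t"
  using residue_representative[of s] S_subset_R by force

lemma av_nonzero_digit: "s \<in> S \<Longrightarrow> s \<noteq> 0 \<Longrightarrow> av s = 1"
  using digit_eq_if_close[of s 0] zero_in_S av_digit_le_1[of s] by fastforce

lemma av_digit_shift_le: "s \<in> S \<Longrightarrow> av (s * \<pi> ^ n) \<le> q ^ n"
  using av_digit_le_1[of s] q_pos by (simp add: av_mult av_power mult_left_le_one_le)

lemma Xn_0: "X 0 = {0}"
  unfolding Xn_def by auto

lemma Xn_Suc: "X (Suc n) = (\<lambda>(u, s). u + s * \<pi> ^ n) ` (X n \<times> S)"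
proof (intro equalityI subsetI)
  fix y assume "y \<in> X (Suc n)"
  then obtain x where x: "\<forall>k<Suc n. x k \<in> S" "y = (\<Sum>k<Suc n. x k * \<pi> ^ k)"
    unfolding Xn_def by blast
  have "(\<Sum>k<n. x k * \<pi> ^ k) \<in> X n"
    using x(1) unfolding Xn_def by (auto intro!: exI[of _ x])
  moreover have "x n \<in> S" and "y = (\<Sum>k<n. x k * \<pi> ^ k) + x n * \<pi> ^ n"
    using x by simp_all
  ultimately show "y \<in> (\<lambda>(u, s). u + s * \<pi> ^ n) ` (X n \<times> S)"
    by force
next
  fix y assume "y \<in> (\<lambda>(u, s). u + s * \<pi> ^ n) ` (X n \<times> S)"
  then obtain u s where u: "u \<in> X n" and s: "s \<in> S" and y: "y = u + s * \<pi> ^ n"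
    by auto
  obtain x where x: "\<forall>k<n. x k \<in> S" "u = (\<Sum>k<n. x k * \<pi> ^ k)"
    using u unfolding Xn_def by blast
  have "(\<Sum>k<n. (x(n := s)) k * \<pi> ^ k) = u"
    using x(2) by (auto intro: sum.cong)
  with x s y have "\<forall>k<Suc n. (x(n := s)) k \<in> S" "y = (\<Sum>k<Suc n. (x(n := s)) k * \<pi> ^ k)"
    by (simp_all add: less_Suc_eq)
  then show "y \<in> X (Suc n)"
    unfolding Xn_def by blast
qed

lemma Xn_SucE:
  assumes "y \<in> X (Suc n)"
  obtains u s where "u \<in> X n" "s \<in> S" "y = u + s * \<pi> ^ n"
  using assms unfolding Xn_Suc by auto

lemma Xn_SucI: "u \<in> X n \<Longrightarrow> s \<in> S \<Longrightarrow> u + s * \<pi> ^ n \<in> X (Suc n)"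
  unfolding Xn_Suc by auto

lemma finite_Xn: "finite (X n)"
  by (induction n) (simp_all add: Xn_0 Xn_Suc finite_S)

lemma Xn_subset_R: "X n \<subseteq> R"
proof (induction n)
  case (Suc n)
  show ?case
  proof
    fix y assume "y \<in> X (Suc n)"
    then obtain u s where "u \<in> X n" "s \<in> S" "y = u + s * \<pi> ^ n"
      by (rule Xn_SucE)
    moreover have "q ^ n \<le> 1"
      using q_pos q_lt_1 by (simp add: power_le_one)
    ultimately show "y \<in> R"
      using Suc av_add_le_max[of u "s * \<pi> ^ n"] av_digit_shift_le[of s n]
      by (auto simp: mem_R_iff)
  qed
qed (simp add: Xn_0 mem_R_iff)

lemma Xn_eq_if_close: "u \<in> X n \<Longrightarrow> v \<in> X n \<Longrightarrow> av (u - v) \<le> q ^ n \<Longrightarrow> u = v"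
proof (induction n arbitrary: u v)
  case (Suc n)
  obtain u0 s where u: "u0 \<in> X n" "s \<in> S" "u = u0 + s * \<pi> ^ n"
    using Suc.prems(1) by (rule Xn_SucE)
  obtain v0 t where v: "v0 \<in> X n" "t \<in> S" "v = v0 + t * \<pi> ^ n"
    using Suc.prems(2) by (rule Xn_SucE)
  have "u0 - v0 = (u - v) - (s - t) * \<pi> ^ n"
    using u v by (simp add: algebra_simps)
  then have "av (u0 - v0) \<le> max (av (u - v)) (av ((s - t) * \<pi> ^ n))"
    using av_diff_le_max[of "u - v" "(s - t) * \<pi> ^ n"] by simp
  moreover have "av ((s - t) * \<pi> ^ n) \<le> q ^ n"
    using av_digit_diff_le_1[OF u(2) v(2)] q_pos by (simp add: av_mult av_power mult_left_le_one_le)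
  ultimately have "av (u0 - v0) \<le> q ^ n"
    using Suc.prems(3) q_power_le[of n "Suc n"] by linarith
  then have "u0 = v0"
    using Suc.IH u v by blast
  then have "u - v = (s - t) * \<pi> ^ n"
    using u v by (simp add: algebra_simps)
  then have "av (s - t) * q ^ n \<le> q * q ^ n"
    using Suc.prems(3) by (simp add: av_mult av_power)
  then have "av (s - t) < 1"
    using q_pos q_lt_1 by simp
  then show ?case
    using \<open>u0 = v0\<close> u v digit_eq_if_close by blast
qed (simp add: Xn_0)

lemma Xn_Suc_inj_on: "inj_on (\<lambda>(u, s). u + s * \<pi> ^ n) (X n \<times> S)"
proof (rule inj_onI, clarsimp)
  fix u s v t assume uv: "u \<in> X n" "s \<in> S" "v \<in> X n" "t \<in> S" "u + s * \<pi> ^ n = v + t * \<pi> ^ n"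
  then have "u - v = (t - s) * \<pi> ^ n"
    by (simp add: algebra_simps)
  then have "av (u - v) \<le> q ^ n"
    using av_digit_diff_le_1[OF uv(4,2)] q_pos by (simp add: av_mult av_power mult_left_le_one_le)
  then have "u = v"
    using Xn_eq_if_close uv by blast
  with uv(5) show "u = v \<and> s = t"
    using pi_nonzero by simp
qed

lemma sum_Xn_Suc: "(\<Sum>y\<in>X (Suc n). g y) = (\<Sum>u\<in>X n. \<Sum>s\<in>S. g (u + s * \<pi> ^ n))"
  unfolding Xn_Suc sum.reindex[OF Xn_Suc_inj_on]
  by (simp add: sum.cartesian_product split_def)

lemma Xn_approximates: "x \<in> R \<Longrightarrow> \<exists>y\<in>X n. av (x - y) \<le> q ^ n"
proof (induction n)
  case (Suc n)
  then obtain y where y: "y \<in> X n" "av (x - y) \<le> q ^ n"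
    by blast
  define z where "z = (x - y) / \<pi> ^ n"
  have "z \<in> R"
    using y(2) q_pos by (simp add: z_def mem_R_iff av_divide av_power divide_le_eq)
  then obtain s where s: "s \<in> S" "av (z - s) < 1"
    using residue_representative by blast
  have "z * \<pi> ^ n = x - y"
    using pi_nonzero by (simp add: z_def)
  then have "x - (y + s * \<pi> ^ n) = (z - s) * \<pi> ^ n"
    by (simp add: algebra_simps)
  then have "av (x - (y + s * \<pi> ^ n)) \<le> q ^ Suc n"
    using av_le_q_if_lt_1[OF s(2)] q_pos by (simp add: av_mult av_power)
  with y s show ?case
    using Xn_SucI by blast
qed (simp add: Xn_0 mem_R_iff)

text \<open>Divide by the largest power of \<open>\<pi>\<close> keeping the quotient in \<open>R\<close>; the quotient is
  then a unit.\<close>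

lemma av_eq_q_power: "z \<in> R \<Longrightarrow> z \<noteq> 0 \<Longrightarrow> \<exists>m. av z = q ^ m"
proof -
  assume z: "z \<in> R" "z \<noteq> 0"
  obtain N where N: "q ^ N < av z"
    using real_arch_pow_inv[OF av_pos[OF z(2)] q_lt_1] by blast
  define A where "A = {k. av z \<le> q ^ k}"
  have "A \<subseteq> {..<N}"
  proof
    fix k assume "k \<in> A"
    then have "q ^ N < q ^ k"
      using N by (simp add: A_def)
    then show "k \<in> {..<N}"
      using q_pos q_lt_1 by (simp add: power_strict_decreasing_iff)
  qed
  then have "finite A"
    by (rule finite_subset) simp
  moreover have "0 \<in> A"
    using z by (simp add: A_def mem_R_iff)
  ultimately have "Max A \<in> A" "Suc (Max A) \<notin> A"
    using Max_ge Max_in by (fastforce, metis Suc_n_not_le_n)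
  then have le: "av z \<le> q ^ Max A" and gt: "q * q ^ Max A < av z"
    by (simp_all add: A_def)
  define w where "w = z / \<pi> ^ Max A"
  have w: "av w = av z / q ^ Max A"
    by (simp add: w_def av_divide av_power)
  have "av w \<le> 1"
    using w le q_pos by simp
  moreover have "\<not> av w < 1"
  proof
    assume "av w < 1"
    then have "av w * q ^ Max A \<le> q * q ^ Max A"
      using av_le_q_if_lt_1 q_pos by (simp add: mult_right_mono)
    with w gt q_pos show False
      by simp
  qed
  ultimately have "av w = 1"
    by simp
  then have "av z = q ^ Max A"
    using w q_pos by (simp add: field_simps)
  then show ?thesis ..
qed

section \<open>Commutators with \<open>D\<close> and with its adjoint\<close>

abbreviation "P \<equiv> real p ^ f"
abbreviation "weight n \<equiv> real p powr - real (n * f)"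
abbreviation "layer_sq \<phi> n \<equiv> (\<Sum>x\<in>X n. (cmod (\<phi> n x))\<^sup>2) * weight n"
abbreviation "D \<equiv> Dop p e f \<pi> S"
abbreviation "D_adj \<equiv> Dstar p e f \<pi> S"
abbreviation "norm_H \<equiv> hnorm p f \<pi> S"
abbreviation "inner_H \<equiv> hinner p f \<pi> S"
abbreviation "in_H \<equiv> inH p f \<pi> S"
abbreviation "dom_D \<equiv> domD p e f \<pi> S"
abbreviation "dom_D_adj \<equiv> domDstar p e f \<pi> S"

lemma P_gt_1: "P > 1"
  using p_gt_1 f_pos by simp

lemma weight_pos: "weight n > 0"
  using p_gt_1 by simp

lemma weight_Suc: "weight n = P * weight (Suc n)"
proof -
  have "weight n = real p powr real f * weight (Suc n)"
    by (simp add: powr_add[symmetric] algebra_simps)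
  then show ?thesis
    using p_gt_1 by (simp add: powr_realpow)
qed

lemma powr_minus_f: "real p powr - real f = 1 / P"
  using p_gt_1 by (simp add: powr_minus powr_realpow divide_inverse)

lemma powr_level: "real p powr (real n / real e) = 1 / q ^ n"
proof -
  have "q ^ n = real p powr (- (real n / real e))"
    using p_gt_1 by (simp add: q_eq powr_power mult.commute)
  then show ?thesis
    using p_gt_1 by (simp add: powr_minus divide_inverse)
qed

lemma in_H_iff: "in_H \<phi> \<longleftrightarrow> (\<forall>n x. x \<notin> X n \<longrightarrow> \<phi> n x = 0) \<and> summable (layer_sq \<phi>)"
  by (simp add: inH_def)

lemma norm_H_eq: "norm_H \<phi> = sqrt (\<Sum>n. layer_sq \<phi> n)"
  by (simp add: hnorm_def)

lemma layer_sq_nonneg: "layer_sq \<phi> n \<ge> 0"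
  using weight_pos by (intro mult_nonneg_nonneg sum_nonneg) (auto intro: less_imp_le)

lemma norm_H_nonneg: "summable (layer_sq \<phi>) \<Longrightarrow> norm_H \<phi> \<ge> 0"
  unfolding norm_H_eq using layer_sq_nonneg by (simp add: suminf_nonneg)

lemma norm_H_le_of_layer_bound:
  assumes "summable (layer_sq \<psi>)" "\<And>n. layer_sq \<phi> n \<le> C * layer_sq \<psi> (Suc n)" "C \<ge> 0"
  shows "summable (layer_sq \<phi>)" and "norm_H \<phi> \<le> sqrt C * norm_H \<psi>"
proof -
  have shifted: "summable (\<lambda>n. C * layer_sq \<psi> (Suc n))"
    by (rule summable_mult[OF summable_Suc_iff[THEN iffD2, OF assms(1)]])
  show summable: "summable (layer_sq \<phi>)"
    by (rule summable_comparison_test'[OF shifted]) (use assms(2) layer_sq_nonneg in simp)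
  have "(\<Sum>n. layer_sq \<phi> n) \<le> (\<Sum>n. C * layer_sq \<psi> (Suc n))"
    by (rule suminf_le[OF assms(2) summable shifted])
  also have "\<dots> = C * (\<Sum>n. layer_sq \<psi> (Suc n))"
    by (rule suminf_mult[OF summable_Suc_iff[THEN iffD2, OF assms(1)]])
  also have "\<dots> \<le> C * (\<Sum>n. layer_sq \<psi> n)"
    using assms(1,3) suminf_split_head[OF assms(1)] layer_sq_nonneg[of \<psi> 0]
    by (intro mult_left_mono) auto
  finally show "norm_H \<phi> \<le> sqrt C * norm_H \<psi>"
    unfolding norm_H_eq by (simp add: real_sqrt_mult[symmetric])
qed

definition commutator :: "('a \<Rightarrow> complex) \<Rightarrow> 'a vec \<Rightarrow> 'a vec" where
  "commutator b \<phi> = vdiff (D (rho b \<phi>)) (rho b (D \<phi>))"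

lemma commutator_apply: "x \<in> X n \<Longrightarrow> commutator b \<phi> n x = of_real (1 / (q ^ n * P)) *
    (\<Sum>s\<in>S. (b x - b (x + s * \<pi> ^ n)) * \<phi> (Suc n) (x + s * \<pi> ^ n))"
  by (simp add: commutator_def vdiff_def Dop_def rho_def powr_level powr_minus_f
      algebra_simps sum_distrib_left sum_subtractf)

lemma sum_av_digits_sq: "(\<Sum>s\<in>S. (av s)\<^sup>2) = P - 1"
proof -
  have "(\<Sum>s\<in>S. (av s)\<^sup>2) = (\<Sum>s\<in>S - {0}. 1)"
    using finite_S zero_in_S av_nonzero_digit by (simp add: sum.remove)
  also have "\<dots> = P - 1"
    using finite_S zero_in_S card_S p_gt_1 by (simp add: of_nat_diff Suc_le_eq)
  finally show ?thesis .
qed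

text \<open>Cauchy-Schwarz against the weights \<open>av s\<close>, one of which vanishes, produces the factor
  \<open>P - 1\<close>.\<close>

lemma layer_sq_commutator_le:
  assumes b: "lipschitz_bound av L b"
  shows "layer_sq (commutator b \<phi>) n \<le> L\<^sup>2 * ((P - 1) / P) * layer_sq \<phi> (Suc n)"
proof -
  let ?c = "\<lambda>x s. cmod (\<phi> (Suc n) (x + s * \<pi> ^ n))"
  have pointwise: "(cmod (commutator b \<phi> n x))\<^sup>2 \<le> (L / P)\<^sup>2 * (P - 1) * (\<Sum>s\<in>S. (?c x s)\<^sup>2)"
    if x: "x \<in> X n" for x
  proof -
    have increment: "cmod (b x - b (x + s * \<pi> ^ n)) \<le> L * q ^ n * av s" if s: "s \<in> S" for s
    proof -
      have "x \<in> R" "x + s * \<pi> ^ n \<in> R"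
        using Xn_SucI[OF x s] x Xn_subset_R by blast+
      then have "cmod (b x - b (x + s * \<pi> ^ n)) \<le> L * av (x - (x + s * \<pi> ^ n))"
        by (rule lipschitz_boundD[OF b])
      also have "av (x - (x + s * \<pi> ^ n)) = q ^ n * av s"
        by (simp add: av_mult av_power mult.commute)
      finally show ?thesis
        by (simp add: mult.assoc)
    qed
    have "cmod (commutator b \<phi> n x)
        = 1 / (q ^ n * P) * cmod (\<Sum>s\<in>S. (b x - b (x + s * \<pi> ^ n)) * \<phi> (Suc n) (x + s * \<pi> ^ n))"
      unfolding commutator_apply[OF x] norm_mult norm_of_real using q_pos P_gt_1 by simp
    also have "\<dots> \<le> 1 / (q ^ n * P) * (\<Sum>s\<in>S. cmod (b x - b (x + s * \<pi> ^ n)) * ?c x s)"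
      using q_pos P_gt_1 by (intro mult_left_mono order_trans[OF norm_sum]) (simp_all add: norm_mult)
    also have "\<dots> \<le> 1 / (q ^ n * P) * (\<Sum>s\<in>S. L * q ^ n * av s * ?c x s)"
      using q_pos P_gt_1 increment by (intro mult_left_mono sum_mono mult_right_mono) auto
    also have "\<dots> = L / P * (\<Sum>s\<in>S. av s * ?c x s)"
      using q_pos by (simp add: sum_distrib_left field_simps)
    finally have "(cmod (commutator b \<phi> n x))\<^sup>2 \<le> (L / P)\<^sup>2 * (\<Sum>s\<in>S. av s * ?c x s)\<^sup>2"
      by (simp add: power_mult_distrib[symmetric] power_mono)
    also have "\<dots> \<le> (L / P)\<^sup>2 * ((\<Sum>s\<in>S. (av s)\<^sup>2) * (\<Sum>s\<in>S. (?c x s)\<^sup>2))"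
      by (intro mult_left_mono Cauchy_Schwarz_ineq_sum) auto
    finally show ?thesis
      by (simp add: sum_av_digits_sq mult.assoc)
  qed
  have "(\<Sum>x\<in>X n. (cmod (commutator b \<phi> n x))\<^sup>2)
      \<le> (\<Sum>x\<in>X n. (L / P)\<^sup>2 * (P - 1) * (\<Sum>s\<in>S. (?c x s)\<^sup>2))"
    using pointwise by (rule sum_mono)
  also have "\<dots> = (L / P)\<^sup>2 * (P - 1) * (\<Sum>y\<in>X (Suc n). (cmod (\<phi> (Suc n) y))\<^sup>2)"
    by (simp add: sum_Xn_Suc sum_distrib_left)
  finally have "layer_sq (commutator b \<phi>) n
      \<le> (L / P)\<^sup>2 * (P - 1) * (\<Sum>y\<in>X (Suc n). (cmod (\<phi> (Suc n) y))\<^sup>2) * weight n"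
    using weight_pos by (intro mult_right_mono) (auto intro: less_imp_le)
  also have "\<dots> = L\<^sup>2 * ((P - 1) / P) * layer_sq \<phi> (Suc n)"
  proof -
    have "(L / P)\<^sup>2 * (P - 1) * \<Sigma> * (P * W) = L\<^sup>2 * ((P - 1) / P) * (\<Sigma> * W)" for \<Sigma> W :: real
      using P_gt_1 by (simp add: power2_eq_square divide_simps)
    then show ?thesis
      unfolding weight_Suc[of n] .
  qed
  finally show ?thesis .
qed

lemma commutator_bounded:
  assumes "lipschitz_bound av L b" "summable (layer_sq \<phi>)"
  shows "summable (layer_sq (commutator b \<phi>))"
    and "norm_H (commutator b \<phi>) \<le> sqrt ((P - 1) / P) * L * norm_H \<phi>"
proof -
  have L: "L \<ge> 0"
    using lipschitz_bound_nonneg[OF assms(1)] .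
  have C: "L\<^sup>2 * ((P - 1) / P) \<ge> 0"
    using P_gt_1 by simp
  show "summable (layer_sq (commutator b \<phi>))"
    using norm_H_le_of_layer_bound(1)[OF assms(2) layer_sq_commutator_le[OF assms(1), of \<phi>] C] .
  have "sqrt (L\<^sup>2 * ((P - 1) / P)) = sqrt ((P - 1) / P) * L"
    using L by (simp only: real_sqrt_mult real_sqrt_abs abs_of_nonneg mult.commute)
  then show "norm_H (commutator b \<phi>) \<le> sqrt ((P - 1) / P) * L * norm_H \<phi>"
    using norm_H_le_of_layer_bound(2)[OF assms(2) layer_sq_commutator_le[OF assms(1), of \<phi>] C]
    by simp
qed

definition supported_below :: "nat \<Rightarrow> 'a vec \<Rightarrow> bool" where
  "supported_below N \<phi> \<longleftrightarrow> (\<forall>n\<ge>N. \<forall>x. \<phi> n x = 0) \<and> (\<forall>n x. x \<notin> X n \<longrightarrow> \<phi> n x = 0)"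

lemma supported_below_in_H:
  assumes "supported_below N \<phi>"
  shows "in_H \<phi>"
proof -
  have "layer_sq \<phi> n = 0" if "n \<notin> {..<N}" for n
    using assms that by (simp add: supported_below_def)
  then have "summable (layer_sq \<phi>)"
    by (rule summable_finite[OF finite_lessThan])
  with assms show ?thesis
    by (simp add: in_H_iff supported_below_def)
qed

lemma supported_below_D: "supported_below N \<phi> \<Longrightarrow> supported_below N (D \<phi>)"
  by (auto simp: supported_below_def Dop_def)

lemma supported_below_rho: "supported_below N \<phi> \<Longrightarrow> supported_below N (rho b \<phi>)"
  by (auto simp: supported_below_def rho_def)

lemma supported_below_vdiff:
  "supported_below N \<phi> \<Longrightarrow> supported_below N \<psi> \<Longrightarrow> supported_below N (vdiff \<phi> \<psi>)"
  by (auto simp: supported_below_def vdiff_def)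

lemma supported_below_commutator: "supported_below N \<phi> \<Longrightarrow> supported_below N (commutator b \<phi>)"
  unfolding commutator_def
  by (intro supported_below_vdiff supported_below_D supported_below_rho)

lemma supported_below_dom_D: "supported_below N \<phi> \<Longrightarrow> \<phi> \<in> dom_D"
  unfolding domD_def using supported_below_in_H supported_below_D by blast

lemma inner_H_supported_below: "supported_below N \<phi> \<Longrightarrow>
    inner_H \<phi> \<psi> = (\<Sum>n<N. (\<Sum>x\<in>X n. \<phi> n x * cnj (\<psi> n x)) * of_real (weight n))"
  unfolding hinner_def supported_below_def by (rule suminf_finite) auto

lemma norm_H_supported_below: "supported_below N \<phi> \<Longrightarrow> norm_H \<phi> = sqrt (\<Sum>n<N. layer_sq \<phi> n)"
  unfolding norm_H_eq supported_below_def by (subst suminf_finite[of "{..<N}"]) auto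

lemma inner_H_vdiff_left:
  assumes "supported_below N \<phi>" "supported_below N \<phi>'"
  shows "inner_H (vdiff \<phi> \<phi>') \<psi> = inner_H \<phi> \<psi> - inner_H \<phi>' \<psi>"
  unfolding inner_H_supported_below[OF supported_below_vdiff[OF assms]]
    inner_H_supported_below[OF assms(1)] inner_H_supported_below[OF assms(2)]
  by (simp add: vdiff_def sum_subtractf left_diff_distrib)

lemma inner_H_vdiff_right: "supported_below N \<phi> \<Longrightarrow>
    inner_H \<phi> (vdiff \<psi> \<psi>') = inner_H \<phi> \<psi> - inner_H \<phi> \<psi>'"
  by (simp add: inner_H_supported_below vdiff_def sum_subtractf right_diff_distrib left_diff_distrib)

lemma inner_H_rho_right: "inner_H \<phi> (rho b \<psi>) = inner_H (rho (\<lambda>x. cnj (b x)) \<phi>) \<psi>"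
  by (simp add: hinner_def rho_def mult_ac)

lemma inner_H_le_norm_mult:
  assumes \<phi>: "supported_below N \<phi>" and \<psi>: "summable (layer_sq \<psi>)"
  shows "cmod (inner_H \<phi> \<psi>) \<le> norm_H \<phi> * norm_H \<psi>"
proof -
  let ?A = "Sigma {..<N} X"
  let ?r = "\<lambda>v. \<lambda>(n, x). cmod (v n x) * sqrt (weight n)"
  have sum_Sigma: "(\<Sum>z\<in>?A. g z) = (\<Sum>n<N. \<Sum>x\<in>X n. g (n, x))" for g :: "nat \<times> 'a \<Rightarrow> real"
    by (subst sum.Sigma) (simp_all add: finite_Xn)
  have L2_set_eq: "L2_set (?r v) ?A = sqrt (\<Sum>n<N. layer_sq v n)" for v
    unfolding L2_set_def sum_Sigma using weight_pos
    by (simp add: power_mult_distrib less_imp_le sum_distrib_right)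
  have "cmod (inner_H \<phi> \<psi>) \<le> (\<Sum>n<N. \<Sum>x\<in>X n. cmod (\<phi> n x) * cmod (\<psi> n x) * weight n)"
    unfolding inner_H_supported_below[OF \<phi>]
    using weight_pos
    by (intro order_trans[OF norm_sum] sum_mono)
       (simp add: norm_mult sum_distrib_right less_imp_le order_trans[OF norm_sum] sum_mono)
  also have "\<dots> = (\<Sum>z\<in>?A. \<bar>?r \<phi> z\<bar> * \<bar>?r \<psi> z\<bar>)"
    unfolding sum_Sigma using weight_pos by (simp add: less_imp_le mult_ac)
  also have "\<dots> \<le> L2_set (?r \<phi>) ?A * L2_set (?r \<psi>) ?A"
    by (rule L2_set_mult_ineq)
  also have "\<dots> = norm_H \<phi> * sqrt (\<Sum>n<N. layer_sq \<psi> n)"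
    by (simp only: L2_set_eq norm_H_supported_below[OF \<phi>])
  also have "\<dots> \<le> norm_H \<phi> * norm_H \<psi>"
    unfolding norm_H_eq[of \<psi>] using \<psi> layer_sq_nonneg
    by (intro mult_left_mono real_sqrt_le_mono sum_le_suminf)
       (simp_all add: norm_H_supported_below[OF \<phi>] sum_nonneg)
  finally show ?thesis .
qed

definition delta :: "nat \<Rightarrow> 'a \<Rightarrow> 'a vec" where
  "delta n x = (\<lambda>m y. if m = n \<and> y = x then 1 else 0)"

lemma supported_below_delta: "x \<in> X n \<Longrightarrow> supported_below (Suc n) (delta n x)"
  by (auto simp: supported_below_def delta_def)

lemma inner_H_delta: "x \<in> X n \<Longrightarrow> inner_H (delta n x) \<eta> = cnj (\<eta> n x) * of_real (weight n)"
  unfolding inner_H_supported_below[OF supported_below_delta]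
  by (simp add: delta_def if_distrib[of "\<lambda>t. t * _"] finite_Xn sum.delta' cong: if_cong)

lemma norm_H_delta: "x \<in> X n \<Longrightarrow> norm_H (delta n x) = sqrt (weight n)"
  unfolding norm_H_supported_below[OF supported_below_delta]
  by (simp add: delta_def if_distrib[of "\<lambda>t. (cmod t)\<^sup>2"] finite_Xn sum.delta' cong: if_cong)

lemma is_adj_val_unique:
  assumes "is_adj_val p e f \<pi> S \<psi> \<eta>" "is_adj_val p e f \<pi> S \<psi> \<eta>'"
  shows "\<eta> = \<eta>'"
proof (intro ext)
  fix n x
  show "\<eta> n x = \<eta>' n x"
  proof (cases "x \<in> X n")
    case True
    have \<delta>: "delta n x \<in> dom_D"
      by (rule supported_below_dom_D[OF supported_below_delta[OF True]])
    have "inner_H (delta n x) \<eta> = inner_H (D (delta n x)) \<psi>"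
      using assms(1) \<delta> by (simp add: is_adj_val_def)
    also have "\<dots> = inner_H (delta n x) \<eta>'"
      using assms(2) \<delta> by (simp add: is_adj_val_def)
    finally show ?thesis
      using weight_pos[of n] by (simp add: inner_H_delta[OF True])
  qed (use assms in \<open>simp add: is_adj_val_def in_H_iff\<close>)
qed

lemma D_adj_is_adj_val:
  assumes "\<psi> \<in> dom_D_adj"
  shows "is_adj_val p e f \<pi> S \<psi> (D_adj \<psi>)"
proof -
  obtain \<eta> where \<eta>: "is_adj_val p e f \<pi> S \<psi> \<eta>"
    using assms unfolding domDstar_def by blast
  show ?thesis
    unfolding Dstar_def
    by (rule theI[of "is_adj_val p e f \<pi> S \<psi>" \<eta>, OF \<eta> is_adj_val_unique[OF _ \<eta>]])
qed

lemma inner_H_D_adj: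
  assumes "\<psi> \<in> dom_D_adj" "supported_below N \<phi>"
  shows "inner_H \<phi> (D_adj \<psi>) = inner_H (D \<phi>) \<psi>"
  using D_adj_is_adj_val[OF assms(1)] supported_below_dom_D[OF assms(2)]
  by (simp add: is_adj_val_def)

definition commutator_adj :: "('a \<Rightarrow> complex) \<Rightarrow> 'a vec \<Rightarrow> 'a vec" where
  "commutator_adj b \<phi> = vdiff (D_adj (rho b \<phi>)) (rho b (D_adj \<phi>))"

lemma inner_H_commutator_adj:
  assumes \<psi>: "supported_below N \<psi>" and \<phi>: "\<phi> \<in> dom_D_adj" "rho b \<phi> \<in> dom_D_adj"
  shows "inner_H \<psi> (commutator_adj b \<phi>) = - inner_H (commutator (\<lambda>x. cnj (b x)) \<psi>) \<phi>"
proof -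
  let ?b' = "\<lambda>x. cnj (b x)"
  have "inner_H \<psi> (D_adj (rho b \<phi>)) = inner_H (rho ?b' (D \<psi>)) \<phi>"
    unfolding inner_H_D_adj[OF \<phi>(2) \<psi>] by (rule inner_H_rho_right)
  moreover have "inner_H \<psi> (rho b (D_adj \<phi>)) = inner_H (D (rho ?b' \<psi>)) \<phi>"
    unfolding inner_H_rho_right by (rule inner_H_D_adj[OF \<phi>(1) supported_below_rho[OF \<psi>]])
  moreover have "inner_H (commutator ?b' \<psi>) \<phi> = inner_H (D (rho ?b' \<psi>)) \<phi> - inner_H (rho ?b' (D \<psi>)) \<phi>"
    unfolding commutator_def
    by (rule inner_H_vdiff_left[OF supported_below_D[OF supported_below_rho[OF \<psi>]]
          supported_below_rho[OF supported_below_D[OF \<psi>]]])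
  ultimately show ?thesis
    unfolding commutator_adj_def inner_H_vdiff_right[OF \<psi>] by simp
qed

definition truncate :: "nat \<Rightarrow> 'a vec \<Rightarrow> 'a vec" where
  "truncate N \<phi> = (\<lambda>n x. if n < N then \<phi> n x else 0)"

lemma
  assumes "\<forall>n x. x \<notin> X n \<longrightarrow> \<phi> n x = 0"
  shows supported_below_truncate: "supported_below N (truncate N \<phi>)"
    and norm_H_truncate: "norm_H (truncate N \<phi>) = sqrt (\<Sum>n<N. layer_sq \<phi> n)"
    and inner_H_truncate: "inner_H (truncate N \<phi>) \<phi> = of_real (\<Sum>n<N. layer_sq \<phi> n)"
proof -
  show supp: "supported_below N (truncate N \<phi>)"
    using assms by (simp add: supported_below_def truncate_def)
  show "norm_H (truncate N \<phi>) = sqrt (\<Sum>n<N. layer_sq \<phi> n)"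
    unfolding norm_H_supported_below[OF supp] by (simp add: truncate_def)
  show "inner_H (truncate N \<phi>) \<phi> = of_real (\<Sum>n<N. layer_sq \<phi> n)"
    unfolding inner_H_supported_below[OF supp]
    by (simp add: truncate_def complex_norm_square[symmetric])
qed

text \<open>Pairing a truncation of \<open>commutator_adj b \<phi>\<close> with itself and moving the commutator
  across turns the bound for \<open>commutator (cnj \<circ> b)\<close> into a bound for every partial sum.\<close>

lemma commutator_adj_bounded:
  assumes b: "lipschitz_bound av L b" and \<phi>: "\<phi> \<in> dom_D_adj" "rho b \<phi> \<in> dom_D_adj"
  shows "summable (layer_sq (commutator_adj b \<phi>))"
    and "norm_H (commutator_adj b \<phi>) \<le> sqrt ((P - 1) / P) * L * norm_H \<phi>"
proof -
  let ?\<xi> = "commutator_adj b \<phi>"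
  let ?K = "sqrt ((P - 1) / P) * L * norm_H \<phi>"
  have \<phi>_summable: "summable (layer_sq \<phi>)"
    using \<phi>(1) by (simp add: domDstar_def in_H_iff)
  have K: "?K \<ge> 0"
    using lipschitz_bound_nonneg[OF b] P_gt_1 norm_H_nonneg[OF \<phi>_summable] by simp
  have vanish: "\<forall>n x. x \<notin> X n \<longrightarrow> ?\<xi> n x = 0"
    using D_adj_is_adj_val[OF \<phi>(1)] D_adj_is_adj_val[OF \<phi>(2)]
    by (simp add: commutator_adj_def vdiff_def rho_def is_adj_val_def in_H_iff)
  have partial_sums: "(\<Sum>n<N. layer_sq ?\<xi> n) \<le> ?K\<^sup>2" for N
  proof (rule le_square_if_le_mult_sqrt)
    let ?\<psi> = "truncate N ?\<xi>"
    let ?b' = "\<lambda>x. cnj (b x)"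
    have \<psi>: "supported_below N ?\<psi>"
      by (rule supported_below_truncate[OF vanish])
    show nonneg: "0 \<le> (\<Sum>n<N. layer_sq ?\<xi> n)"
      by (simp add: sum_nonneg layer_sq_nonneg)
    have "(\<Sum>n<N. layer_sq ?\<xi> n) = cmod (inner_H ?\<psi> ?\<xi>)"
      by (simp only: inner_H_truncate[OF vanish] norm_of_real abs_of_nonneg[OF nonneg])
    also have "\<dots> = cmod (inner_H (commutator ?b' ?\<psi>) \<phi>)"
      by (simp add: inner_H_commutator_adj[OF \<psi> \<phi>])
    also have "\<dots> \<le> norm_H (commutator ?b' ?\<psi>) * norm_H \<phi>"
      by (rule inner_H_le_norm_mult[OF supported_below_commutator[OF \<psi>] \<phi>_summable])
    also have "\<dots> \<le> sqrt ((P - 1) / P) * L * norm_H ?\<psi> * norm_H \<phi>"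
      using supported_below_in_H[OF \<psi>] norm_H_nonneg[OF \<phi>_summable]
      by (intro mult_right_mono commutator_bounded(2)[OF lipschitz_bound_cnj[OF b]])
         (simp_all add: in_H_iff)
    also have "\<dots> = ?K * sqrt (\<Sum>n<N. layer_sq ?\<xi> n)"
      by (simp add: norm_H_truncate[OF vanish])
    finally show "(\<Sum>n<N. layer_sq ?\<xi> n) \<le> ?K * sqrt (\<Sum>n<N. layer_sq ?\<xi> n)" .
  qed (rule K)
  show summable: "summable (layer_sq ?\<xi>)"
    using layer_sq_nonneg partial_sums by (rule summableI_nonneg_bounded)
  show "norm_H ?\<xi> \<le> ?K"
    unfolding norm_H_eq[of ?\<xi>] using K suminf_le_const[OF summable partial_sums] by (rule real_le_lsqrt)
qed

section \<open>The upper bound\<close>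

definition admissible_pair :: "('a \<Rightarrow> complex) \<Rightarrow> 'a vec \<Rightarrow> 'a vec \<Rightarrow> bool" where
  "admissible_pair a \<phi>1 \<phi>2 \<longleftrightarrow> \<phi>1 \<in> dom_D_adj \<and> \<phi>2 \<in> dom_D \<and> rho a \<phi>1 \<in> dom_D_adj \<and>
     rho a \<phi>2 \<in> dom_D \<and> (norm_H \<phi>1)\<^sup>2 + (norm_H \<phi>2)\<^sup>2 > 0"

definition commutator_ratio :: "('a \<Rightarrow> complex) \<Rightarrow> 'a vec \<Rightarrow> 'a vec \<Rightarrow> real" where
  "commutator_ratio a \<phi>1 \<phi>2 =
     sqrt ((norm_H (commutator a \<phi>2))\<^sup>2 + (norm_H (commutator_adj a \<phi>1))\<^sup>2)
       / sqrt ((norm_H \<phi>1)\<^sup>2 + (norm_H \<phi>2)\<^sup>2)"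

lemma L_D_eq_Sup: "L_D p e f \<pi> S a =
    Sup {ereal (commutator_ratio a \<phi>1 \<phi>2) | \<phi>1 \<phi>2. admissible_pair a \<phi>1 \<phi>2}"
  by (simp add: L_D_def admissible_pair_def commutator_ratio_def commutator_def commutator_adj_def)

lemma commutator_ratio_le_L_D: "admissible_pair a \<phi>1 \<phi>2 \<Longrightarrow> ereal (commutator_ratio a \<phi>1 \<phi>2) \<le> L_D p e f \<pi> S a"
  unfolding L_D_eq_Sup by (blast intro: Sup_upper)

lemma L_D_le_if_ratio_le:
  assumes "\<And>\<phi>1 \<phi>2. admissible_pair a \<phi>1 \<phi>2 \<Longrightarrow> commutator_ratio a \<phi>1 \<phi>2 \<le> c"
  shows "L_D p e f \<pi> S a \<le> ereal c"
  unfolding L_D_eq_Sup by (rule Sup_least) (auto simp: assms)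

lemma commutator_ratio_le:
  assumes a: "lipschitz_bound av L a" and adm: "admissible_pair a \<phi>1 \<phi>2"
  shows "commutator_ratio a \<phi>1 \<phi>2 \<le> sqrt ((P - 1) / P) * L"
proof -
  let ?K = "sqrt ((P - 1) / P) * L"
  have \<phi>: "\<phi>1 \<in> dom_D_adj" "summable (layer_sq \<phi>2)" "\<phi>1 \<in> dom_D_adj" "rho a \<phi>1 \<in> dom_D_adj"
    using adm by (simp_all add: admissible_pair_def domD_def in_H_iff)
  have "0 \<le> ?K"
    using lipschitz_bound_nonneg[OF a] P_gt_1 by simp
  have "(norm_H (commutator a \<phi>2))\<^sup>2 \<le> (?K * norm_H \<phi>2)\<^sup>2"
    using commutator_bounded[OF a \<phi>(2)] norm_H_nonneg by (intro power_mono) (auto simp: mult.assoc)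
  moreover have "(norm_H (commutator_adj a \<phi>1))\<^sup>2 \<le> (?K * norm_H \<phi>1)\<^sup>2"
    using commutator_adj_bounded[OF a \<phi>(3,4)] norm_H_nonneg by (intro power_mono) (auto simp: mult.assoc)
  ultimately have "sqrt ((norm_H (commutator a \<phi>2))\<^sup>2 + (norm_H (commutator_adj a \<phi>1))\<^sup>2)
      \<le> sqrt (?K\<^sup>2 * ((norm_H \<phi>1)\<^sup>2 + (norm_H \<phi>2)\<^sup>2))"
    by (intro real_sqrt_le_mono) (simp add: power_mult_distrib algebra_simps)
  also have "\<dots> = ?K * sqrt ((norm_H \<phi>1)\<^sup>2 + (norm_H \<phi>2)\<^sup>2)"
    using \<open>0 \<le> ?K\<close> by (simp only: real_sqrt_mult real_sqrt_abs abs_of_nonneg)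
  finally show ?thesis
    using adm by (simp add: commutator_ratio_def admissible_pair_def divide_le_eq)
qed

lemma L_D_le: "lipschitz_on_R av a \<Longrightarrow> L_D p e f \<pi> S a \<le> ereal (sqrt ((P - 1) / P) * L1 av a)"
  by (intro L_D_le_if_ratio_le commutator_ratio_le lipschitz_bound_L1)

section \<open>The lower bound\<close>

lemma norm_H_ge_entry:
  assumes "summable (layer_sq \<phi>)" "x \<in> X n"
  shows "cmod (\<phi> n x) * sqrt (weight n) \<le> norm_H \<phi>"
proof -
  have "(cmod (\<phi> n x))\<^sup>2 * weight n \<le> layer_sq \<phi> n"
    using assms(2) finite_Xn weight_pos
    by (intro mult_right_mono member_le_sum) (auto intro: less_imp_le)
  also have "\<dots> \<le> (\<Sum>n. layer_sq \<phi> n)"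
    using sum_le_suminf[OF assms(1), of "{n}"] layer_sq_nonneg by simp
  finally have "sqrt ((cmod (\<phi> n x))\<^sup>2 * weight n) \<le> norm_H \<phi>"
    unfolding norm_H_eq by (rule real_sqrt_le_mono)
  then show ?thesis
    by (simp add: real_sqrt_mult)
qed

lemma zero_in_dom_D_adj: "(\<lambda>_ _. 0) \<in> dom_D_adj"
  unfolding domDstar_def mem_Collect_eq
proof (intro conjI exI)
  show "in_H (\<lambda>_ _. 0)"
    by (simp add: in_H_iff)
  show "is_adj_val p e f \<pi> S (\<lambda>_ _. 0) (\<lambda>_ _. 0)"
    by (simp add: is_adj_val_def in_H_iff hinner_def)
qed

lemma commutator_delta_apply:
  assumes x: "x \<in> X n" and s: "s \<in> S"
  shows "commutator a (delta (Suc n) (x + s * \<pi> ^ n)) n x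
    = of_real (1 / (q ^ n * P)) * (a x - a (x + s * \<pi> ^ n))"
proof -
  let ?y = "x + s * \<pi> ^ n"
  have "(\<Sum>t\<in>S. (a x - a (x + t * \<pi> ^ n)) * delta (Suc n) ?y (Suc n) (x + t * \<pi> ^ n))
      = (\<Sum>t\<in>S. if t = s then a x - a ?y else 0)"
    using pi_nonzero by (intro sum.cong) (auto simp: delta_def)
  also have "\<dots> = a x - a ?y"
    using s finite_S by simp
  finally show ?thesis
    by (simp add: commutator_apply[OF x])
qed

lemma admissible_pair_delta: "y \<in> X n \<Longrightarrow> admissible_pair a (\<lambda>_ _. 0) (delta n y)"
  using zero_in_dom_D_adj supported_below_dom_D[OF supported_below_delta]
    supported_below_dom_D[OF supported_below_rho[OF supported_below_delta]]
    norm_H_delta weight_pos[of n]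
  by (simp add: admissible_pair_def rho_def hnorm_def)

lemma increment_le_commutator_ratio:
  assumes x: "x \<in> X n" and s: "s \<in> S"
  shows "cmod (a x - a (x + s * \<pi> ^ n)) / (q ^ n * sqrt P)
    \<le> commutator_ratio a (\<lambda>_ _. 0) (delta (Suc n) (x + s * \<pi> ^ n))"
proof -
  let ?y = "x + s * \<pi> ^ n"
  let ?\<delta> = "delta (Suc n) ?y"
  let ?d = "cmod (a x - a ?y)"
  have y: "?y \<in> X (Suc n)"
    by (rule Xn_SucI[OF x s])
  have entry: "cmod (commutator a ?\<delta> n x) = ?d / (q ^ n * (sqrt P * sqrt P))"
    unfolding commutator_delta_apply[OF x s] norm_mult norm_of_real using q_pos P_gt_1 by simp
  have weights: "sqrt (weight n) = sqrt P * sqrt (weight (Suc n))"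
    unfolding weight_Suc[of n] real_sqrt_mult ..
  have cancel: "d / (Q * (r * r)) * (r * W) / W = d / (Q * r)" if "r > 0" "W > 0" for d Q r W :: real
    using that by (simp add: field_simps)
  have "?d / (q ^ n * sqrt P) = cmod (commutator a ?\<delta> n x) * sqrt (weight n) / sqrt (weight (Suc n))"
    unfolding entry weights by (rule cancel[symmetric]) (use P_gt_1 weight_pos in auto)
  also have "\<dots> \<le> norm_H (commutator a ?\<delta>) / sqrt (weight (Suc n))"
    using norm_H_ge_entry[OF _ x] supported_below_in_H[OF supported_below_commutator[OF supported_below_delta[OF y]]]
    by (intro divide_right_mono) (auto simp: in_H_iff)
  also have "\<dots> \<le> sqrt ((norm_H (commutator a ?\<delta>))\<^sup>2 + (norm_H (commutator_adj a (\<lambda>_ _. 0)))\<^sup>2)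
      / sqrt (weight (Suc n))"
    by (intro divide_right_mono real_le_rsqrt) simp_all
  also have "\<dots> = commutator_ratio a (\<lambda>_ _. 0) ?\<delta>"
    unfolding commutator_ratio_def norm_H_delta[OF y] using weight_pos[of "Suc n"] by (simp add: hnorm_def)
  finally show ?thesis .
qed

lemma increment_le_L_D:
  assumes "x \<in> X n" "s \<in> S"
  shows "ereal (cmod (a x - a (x + s * \<pi> ^ n)) / (q ^ n * sqrt P)) \<le> L_D p e f \<pi> S a"
proof -
  have "ereal (cmod (a x - a (x + s * \<pi> ^ n)) / (q ^ n * sqrt P))
      \<le> ereal (commutator_ratio a (\<lambda>_ _. 0) (delta (Suc n) (x + s * \<pi> ^ n)))"
    using increment_le_commutator_ratio[OF assms] by simp
  then show ?thesis
    using commutator_ratio_le_L_D[OF admissible_pair_delta[OF Xn_SucI[OF assms]]] by (rule order_trans)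
qed

lemma telescoping_bound:
  assumes C: "C \<ge> 0"
    and increments: "\<And>n x s. x \<in> X n \<Longrightarrow> s \<in> S \<Longrightarrow> cmod (a x - a (x + s * \<pi> ^ n)) \<le> C * q ^ n"
  shows "u \<in> X m \<Longrightarrow> v \<in> X N \<Longrightarrow> m \<le> N \<Longrightarrow> av (u - v) \<le> q ^ m \<Longrightarrow>
    cmod (a u - a v) \<le> C * (q ^ m - q ^ N) / (1 - q)"
proof (induction N arbitrary: v)
  case (Suc N)
  show ?case
  proof (cases "m = Suc N")
    case True
    then have "u = v"
      using Xn_eq_if_close Suc.prems by blast
    with True show ?thesis
      by simp
  next
    case False
    then have "m \<le> N"
      using Suc.prems(3) by simp
    obtain v0 t where v: "v0 \<in> X N" "t \<in> S" "v = v0 + t * \<pi> ^ N"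
      using Suc.prems(2) by (rule Xn_SucE)
    have "av (u - v0) \<le> max (av (u - v)) (av (t * \<pi> ^ N))"
      using av_add_le_max[of "u - v" "t * \<pi> ^ N"] v(3) by simp
    then have "av (u - v0) \<le> q ^ m"
      using Suc.prems(4) av_digit_shift_le[OF v(2), of N] q_power_le[OF \<open>m \<le> N\<close>] by linarith
    then have "cmod (a u - a v0) \<le> C * (q ^ m - q ^ N) / (1 - q)"
      using Suc.IH[OF Suc.prems(1) v(1) \<open>m \<le> N\<close>] by blast
    moreover have "cmod (a v0 - a v) \<le> C * q ^ N"
      using increments[OF v(1,2)] v(3) by simp
    ultimately have "cmod (a u - a v) \<le> C * (q ^ m - q ^ N) / (1 - q) + C * q ^ N"
      using norm_triangle_ineq[of "a u - a v0" "a v0 - a v"] by simp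
    also have "\<dots> = C * (q ^ m - q ^ Suc N) / (1 - q)"
      using q_lt_1 by (simp add: field_simps)
    finally show ?thesis .
  qed
qed (simp add: Xn_0)

lemma increment_bound_near_Xn:
  assumes a: "lipschitz_on_R av a" and C: "C \<ge> 0"
    and increments: "\<And>n x s. x \<in> X n \<Longrightarrow> s \<in> S \<Longrightarrow> cmod (a x - a (x + s * \<pi> ^ n)) \<le> C * q ^ n"
    and u: "u \<in> X m" and z: "z \<in> R" "av (u - z) \<le> q ^ m"
  shows "cmod (a u - a z) \<le> C * q ^ m / (1 - q)"
proof (rule field_le_epsilon)
  fix \<epsilon> :: real assume "\<epsilon> > 0"
  let ?L = "L1 av a"
  have L: "?L \<ge> 0"
    by (rule lipschitz_bound_nonneg[OF lipschitz_bound_L1[OF a]])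
  obtain N0 where N0: "q ^ N0 < \<epsilon> / (?L + 1)"
    using real_arch_pow_inv[of "\<epsilon> / (?L + 1)"] \<open>\<epsilon> > 0\<close> L q_lt_1 by auto
  define N where "N = max N0 m"
  obtain zN where zN: "zN \<in> X N" "av (z - zN) \<le> q ^ N"
    using Xn_approximates[OF z(1)] by blast
  have "q ^ N \<le> q ^ m" "q ^ N \<le> q ^ N0"
    by (simp_all add: N_def q_power_le)
  then have "av (u - zN) \<le> q ^ m"
    using av_diff_ultrametric[of u zN z] z(2) zN(2) by linarith
  then have "cmod (a u - a zN) \<le> C * (q ^ m - q ^ N) / (1 - q)"
    using telescoping_bound[OF C increments u zN(1)] by (simp add: N_def)
  also have "\<dots> \<le> C * q ^ m / (1 - q)"
    using C q_pos q_lt_1 by (intro divide_right_mono mult_left_mono) auto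
  finally have near: "cmod (a u - a zN) \<le> C * q ^ m / (1 - q)" .
  have "cmod (a zN - a z) \<le> ?L * av (zN - z)"
    using lipschitz_boundD[OF lipschitz_bound_L1[OF a]] zN(1) z(1) Xn_subset_R by blast
  also have "\<dots> \<le> ?L * (\<epsilon> / (?L + 1))"
    using L zN(2) N0 \<open>q ^ N \<le> q ^ N0\<close> av_diff_commute[of zN z] by (intro mult_left_mono) auto
  also have "\<dots> \<le> \<epsilon>"
    using L \<open>\<epsilon> > 0\<close> by (simp add: field_simps)
  finally show "cmod (a u - a z) \<le> C * q ^ m / (1 - q) + \<epsilon>"
    using near norm_triangle_ineq[of "a u - a zN" "a zN - a z"] by simp
qed

lemma lipschitz_bound_of_increments:
  assumes a: "lipschitz_on_R av a" and C: "C \<ge> 0"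
    and increments: "\<And>n x s. x \<in> X n \<Longrightarrow> s \<in> S \<Longrightarrow> cmod (a x - a (x + s * \<pi> ^ n)) \<le> C * q ^ n"
  shows "lipschitz_bound av (2 * C / (1 - q)) a"
  unfolding lipschitz_bound_def
proof (intro ballI)
  fix x y assume x: "x \<in> R" and y: "y \<in> R"
  show "cmod (a x - a y) \<le> 2 * C / (1 - q) * av (x - y)"
  proof (cases "x = y")
    case False
    have "x - y \<in> R"
      using x y av_diff_le_max[of x y] by (simp add: mem_R_iff)
    moreover have "x - y \<noteq> 0"
      using False by simp
    ultimately obtain m where m: "av (x - y) = q ^ m"
      using av_eq_q_power by blast
    obtain u where u: "u \<in> X m" "av (x - u) \<le> q ^ m"
      using Xn_approximates[OF x] by blast
    have "av (u - y) \<le> q ^ m"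
      using av_diff_ultrametric[of u y x] u(2) m av_diff_commute[of x u] by linarith
    then have "cmod (a u - a y) \<le> C * q ^ m / (1 - q)"
      using increment_bound_near_Xn[OF a C increments u(1) y] by blast
    moreover have "cmod (a u - a x) \<le> C * q ^ m / (1 - q)"
      using increment_bound_near_Xn[OF a C increments u(1) x] u(2) av_diff_commute[of x u] by simp
    ultimately have "cmod (a x - a y) \<le> 2 * C * q ^ m / (1 - q)"
      using norm_triangle_ineq[of "a x - a u" "a u - a y"] norm_minus_commute[of "a x" "a u"] by simp
    then show ?thesis
      using m by simp
  qed simp
qed

lemma L_D_ge: "lipschitz_on_R av a \<Longrightarrow> ereal ((1 - q) / (2 * sqrt P) * L1 av a) \<le> L_D p e f \<pi> S a"
proof (cases "L_D p e f \<pi> S a")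
  case (real M)
  assume a: "lipschitz_on_R av a"
  have "q ^ n * sqrt P > 0" for n
    using p_gt_1 by (intro mult_pos_pos zero_less_power q_pos) simp
  then have increments: "cmod (a x - a (x + s * \<pi> ^ n)) \<le> (M * sqrt P) * q ^ n" if "x \<in> X n" "s \<in> S" for x s n
    using increment_le_L_D[OF that, of a] real by (simp add: divide_le_eq mult_ac)
  have "M \<ge> 0"
    using increments[of 0 0 0] zero_in_S P_gt_1 norm_ge_zero[of "a 0 - a 0"]
    by (simp add: Xn_0 zero_le_mult_iff)
  then have "L1 av a \<le> 2 * (M * sqrt P) / (1 - q)"
    using P_gt_1 by (intro L1_le_lipschitz_bound lipschitz_bound_of_increments[OF a _ increments]) auto
  then have "(1 - q) / (2 * sqrt P) * L1 av a \<le> M"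
    using q_lt_1 p_gt_1 by (simp add: field_simps)
  then show ?thesis
    using real by simp
next
  case MInf
  have "0 \<in> X 0"
    by (simp add: Xn_0)
  from increment_le_L_D[OF this zero_in_S, of a] MInf show ?thesis
    by simp
qed simp

end

theorem mainTheorem4:
  fixes p e f :: nat and av :: "'a::field_char_0 \<Rightarrow> real" and \<pi> :: 'a and S :: "'a set"
    and a :: "'a \<Rightarrow> complex"
  assumes "prime p"
    and "padic_extension p av"
    and "local_data p av e f \<pi> S"
    and "lipschitz_on_R av a"
  shows "ereal ((real p powr (1 / real e) - 1) / (2 * real p powr (1 / real e) * sqrt (real p ^ f))
              * L1 av a) \<le> L_D p e f \<pi> S a
       \<and> L_D p e f \<pi> S a \<le> ereal (sqrt ((real p ^ f - 1) / real p ^ f) * L1 av a)"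
proof -
  interpret padic_local_field av p e f \<pi> S
    using nonarch_abs_if_padic_extension[OF assms(2)] prime_gt_1_nat[OF assms(1)] assms(3)
    by (simp add: padic_local_field_def padic_local_field_axioms_def)
  have root: "real p powr (1 / real e) = 1 / q"
    using p_gt_1 by (simp add: q_eq powr_minus divide_inverse)
  have "(real p powr (1 / real e) - 1) / (2 * real p powr (1 / real e) * sqrt P) = (1 - q) / (2 * sqrt P)"
    unfolding root using q_pos p_gt_1 by (simp add: field_simps)
  then show ?thesis
    using L_D_ge[OF assms(4)] L_D_le[OF assms(4)] by simp
qed

end
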